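(* Assume we are either in the $\delta$-algebraic setting or in the $\delta$-arithmetic setting, and let $n\geq 2$. Let $\beta:R^{\times}\times R^{n-1}\rightarrow R^{n-1}$ be a $\delta$-map, $\psi:R^{\times}\rightarrow\mathfrak{gl}_{n-1}(R)$ a $\delta$-homomorphism (a group homomorphism from the multiplicative group $R^{\times}$ to the additive group $\mathfrak{gl}_{n-1}(R)$ which is a $\delta$-map), and $\lambda\in R^{n-1}$ a row vector such that for all $(a_1,b_1),(a_2,b_2)\in R^{\times}\times R^{n-1}$, $$\beta(a_1a_2,b_1+a_1b_2)=\beta(a_1,b_1)+a_1\beta(a_2,b_2)+b_1\psi(a_2)+a_2^{-1}b_2\lambda^tb_1+a_2^{-1}b_1\lambda^tb_2+a_1^{-1}(a_2^{-1}-1)b_1\lambda^tb_1.$$ 1) In the $\delta$-arithmetic setting, $\psi=0$ and there exist $\mu\in R^{n-1}$ and $\nu\in\mathfrak{gl}_{n-1}(R)$ such that for all $a\in R^{\times}$, $b\in R^{n-1}$, $$\beta(a,b)=(1-a)\mu+a^{-1}b\lambda^tb+b\nu.$$ 2) In the $\delta$-algebraic setting, there exist $\mu\in R^{n-1}$ and $\nu,\eta\in\mathfrak{gl}_{n-1}(R)$ such that for all $a\in R^{\times}$, $b\in R^{n-1}$, $$\psi(a)=-(a^{-1}\delta a)\nu,\qquad \beta(a,b)=(1-a)\mu+a^{-1}b\lambda^tb+b\eta+a\,\delta(a^{-1}b)\,\nu.$$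
   Context: Elements of $R^{n-1}$ are row vectors ($1\times(n-1)$ matrices), $t$ denotes transpose, $\delta$ is applied componentwise to vectors. $\delta$-arithmetic setting: $p$ odd prime, $R$ the complete discrete valuation ring with maximal ideal $pR$ and residue field $\mathbb{F}_p^a$, $\phi$ the Frobenius lift on $R$, $\delta x=(\phi(x)-x^p)/p$; a $\delta$-map $R^{\times}\times R^{n-1}\to R^M$ (resp. $R^{\times}\to R^M$) is one of the form $(a,b)\mapsto F(a,b,\delta a,\delta b,\dots,\delta^m a,\delta^m b)$ with $F$ an $M$-tuple of restricted power series over $R$ ($p$-adically completed) in these variables and the inverse of the variable for $a$. $\delta$-algebraic setting: $R$ a $\delta$-closed (Kolchin's constrainedly closed) field of characteristic zero with derivation $\delta$; $\delta$-maps defined the same way with $F$ polynomial over $R$. *)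

theory Defs
  imports "HOL-Analysis.Analysis" "HOL-Computational_Algebra.Polynomial"
begin

definition uinv :: "'a::comm_ring_1 \<Rightarrow> 'a" where
  "uinv a = (THE b. a * b = 1)"

text \<open>The scalar x y^t of two row vectors.\<close>
definition vdot :: "'a::comm_ring_1 ^ 'm \<Rightarrow> 'a ^ 'm \<Rightarrow> 'a" where
  "vdot x y = (\<Sum>i\<in>UNIV. x $ i * y $ i)"

definition mon_eval :: "('v \<Rightarrow> nat) \<Rightarrow> ('v \<Rightarrow> 'a::comm_ring_1) \<Rightarrow> 'a" where
  "mon_eval e x = (\<Prod>v\<in>{v. e v \<noteq> 0}. x v ^ e v)"

datatype setting = Arith nat | Alg

text \<open>delta-arithmetic setting: R is a p-adically complete DVR with maximal ideal pR,
  residue field an algebraic closure of F_p, phi a Frobenius lift, p * delta x = phi x - x^p.\<close>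
definition delta_arith_setting :: "nat \<Rightarrow> ('a::idom \<Rightarrow> 'a) \<Rightarrow> bool" where
  "delta_arith_setting p \<delta> \<longleftrightarrow>
     prime p \<and> odd p \<and>
     (let P = (of_nat p :: 'a) in
       P \<noteq> 0 \<and> \<not> (P dvd 1) \<and>
       (\<forall>x. x \<noteq> 0 \<longrightarrow> (\<exists>u k. (u dvd 1) \<and> x = u * P ^ k)) \<and>
       (\<forall>x. (\<forall>k. P ^ k dvd x) \<longrightarrow> x = 0) \<and>
       (\<forall>s::nat \<Rightarrow> 'a. (\<forall>k. P ^ k dvd (s (Suc k) - s k)) \<longrightarrow>
            (\<exists>y. \<forall>k. P ^ k dvd (y - s k))) \<and>
       (\<forall>q::'a poly. degree q \<ge> 1 \<and> lead_coeff q = 1 \<longrightarrow> (\<exists>x. P dvd poly q x)) \<and>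
       (\<forall>x. \<exists>q::int poly. degree q \<ge> 1 \<and> lead_coeff q = 1 \<and>
            P dvd poly (map_poly of_int q) x) \<and>
       (\<exists>\<phi>::'a \<Rightarrow> 'a. \<phi> 1 = 1 \<and> (\<forall>x y. \<phi> (x + y) = \<phi> x + \<phi> y) \<and>
            (\<forall>x y. \<phi> (x * y) = \<phi> x * \<phi> y) \<and>
            (\<forall>x. P * \<delta> x = \<phi> x - x ^ p)))"

text \<open>Differential polynomials in one differential indeterminate y: variable i stands for
  delta^i y; a polynomial is a finitely supported coefficient function on exponent vectors.\<close>
definition dpoly :: "((nat \<Rightarrow> nat) \<Rightarrow> 'a::comm_ring_1) \<Rightarrow> bool" where
  "dpoly c \<longleftrightarrow> finite {e. c e \<noteq> 0} \<and> (\<forall>e. c e \<noteq> 0 \<longrightarrow> finite {i. e i \<noteq> 0})"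

definition dp_vars :: "((nat \<Rightarrow> nat) \<Rightarrow> 'a::comm_ring_1) \<Rightarrow> nat set" where
  "dp_vars c = {i. \<exists>e. c e \<noteq> 0 \<and> e i \<noteq> 0}"

definition dp_eval :: "('a \<Rightarrow> 'a) \<Rightarrow> ((nat \<Rightarrow> nat) \<Rightarrow> 'a::comm_ring_1) \<Rightarrow> 'a \<Rightarrow> 'a" where
  "dp_eval \<delta> c y = (\<Sum>e\<in>{e. c e \<noteq> 0}. c e * mon_eval e (\<lambda>i. (\<delta> ^^ i) y))"

text \<open>delta-algebraic setting: a differential field of characteristic zero which is
  delta-closed (stated via Blum's axioms for differentially closed fields).\<close>
definition delta_alg_setting :: "('a::idom \<Rightarrow> 'a) \<Rightarrow> bool" where
  "delta_alg_setting \<delta> \<longleftrightarrow>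
     (\<forall>x::'a. x \<noteq> 0 \<longrightarrow> (x dvd 1)) \<and>
     (\<forall>k::nat. of_nat (Suc k) \<noteq> (0::'a)) \<and>
     (\<forall>x y. \<delta> (x + y) = \<delta> x + \<delta> y) \<and>
     (\<forall>x y. \<delta> (x * y) = x * \<delta> y + y * \<delta> x) \<and>
     (\<forall>cf cg :: (nat \<Rightarrow> nat) \<Rightarrow> 'a.
        dpoly cf \<and> dpoly cg \<and> dp_vars cf \<noteq> {} \<and> (\<exists>e. cg e \<noteq> 0) \<and>
        (\<forall>i\<in>dp_vars cg. i < Max (dp_vars cf)) \<longrightarrow>
        (\<exists>y. dp_eval \<delta> cf y = 0 \<and> dp_eval \<delta> cg y \<noteq> 0))"

definition in_setting :: "setting \<Rightarrow> ('a::idom \<Rightarrow> 'a) \<Rightarrow> bool" where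
  "in_setting S \<delta> = (case S of Arith p \<Rightarrow> delta_arith_setting p \<delta> | Alg \<Rightarrow> delta_alg_setting \<delta>)"

text \<open>Coefficient functions: polynomials (algebraic setting) or restricted power series
  (arithmetic setting: coefficients tend to 0 p-adically).\<close>
definition admissible :: "setting \<Rightarrow> (('v \<Rightarrow> nat) \<Rightarrow> 'a::comm_ring_1) \<Rightarrow> bool" where
  "admissible S c = (case S of
      Alg \<Rightarrow> finite {e. c e \<noteq> 0}
    | Arith p \<Rightarrow> (\<forall>k. finite {e. \<not> (of_nat p ^ k dvd c e)}))"

text \<open>Evaluation: finite sum, resp. p-adic limit of the partial sums.\<close>
definition series_eval :: "setting \<Rightarrow> (('v \<Rightarrow> nat) \<Rightarrow> 'a::comm_ring_1) \<Rightarrow> ('v \<Rightarrow> 'a) \<Rightarrow> 'a" where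
  "series_eval S c x = (case S of
      Alg \<Rightarrow> (\<Sum>e\<in>{e. c e \<noteq> 0}. c e * mon_eval e x)
    | Arith p \<Rightarrow> (THE y. \<forall>k. of_nat p ^ k dvd
          (y - (\<Sum>e\<in>{e. \<not> (of_nat p ^ k dvd c e)}. c e * mon_eval e x))))"

text \<open>Variables for delta-maps on R^x times R^(n-1): a^(-1), delta^i a, delta^i b_j.\<close>
datatype 'm dvar = InvA | DA nat | DB nat 'm

fun dvar_ord :: "'m dvar \<Rightarrow> nat" where
  "dvar_ord InvA = 0" | "dvar_ord (DA i) = i" | "dvar_ord (DB i j) = i"

fun dassign :: "('a::comm_ring_1 \<Rightarrow> 'a) \<Rightarrow> 'a \<Rightarrow> 'a ^ 'm \<Rightarrow> 'm dvar \<Rightarrow> 'a" where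
  "dassign \<delta> a b InvA = uinv a"
| "dassign \<delta> a b (DA i) = (\<delta> ^^ i) a"
| "dassign \<delta> a b (DB i j) = (\<delta> ^^ i) (b $ j)"

definition delta_fun :: "setting \<Rightarrow> ('a::comm_ring_1 \<Rightarrow> 'a) \<Rightarrow> ('a \<Rightarrow> 'a ^ 'm \<Rightarrow> 'a) \<Rightarrow> bool" where
  "delta_fun S \<delta> f \<longleftrightarrow> (\<exists>(c :: ('m dvar \<Rightarrow> nat) \<Rightarrow> 'a) m. admissible S c \<and>
      (\<forall>e v. c e \<noteq> 0 \<and> e v \<noteq> 0 \<longrightarrow> dvar_ord v \<le> m) \<and>
      (\<forall>a b. (a dvd 1) \<longrightarrow> f a b = series_eval S c (dassign \<delta> a b)))"

text \<open>Variables for delta-maps on R^x: a^(-1), delta^i a.\<close>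
datatype avar = AInv | AD nat

fun avar_ord :: "avar \<Rightarrow> nat" where
  "avar_ord AInv = 0" | "avar_ord (AD i) = i"

fun aassign :: "('a::comm_ring_1 \<Rightarrow> 'a) \<Rightarrow> 'a \<Rightarrow> avar \<Rightarrow> 'a" where
  "aassign \<delta> a AInv = uinv a"
| "aassign \<delta> a (AD i) = (\<delta> ^^ i) a"

definition delta_fun1 :: "setting \<Rightarrow> ('a::comm_ring_1 \<Rightarrow> 'a) \<Rightarrow> ('a \<Rightarrow> 'a) \<Rightarrow> bool" where
  "delta_fun1 S \<delta> g \<longleftrightarrow> (\<exists>(c :: (avar \<Rightarrow> nat) \<Rightarrow> 'a) m. admissible S c \<and>
      (\<forall>e v. c e \<noteq> 0 \<and> e v \<noteq> 0 \<longrightarrow> avar_ord v \<le> m) \<and>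
      (\<forall>a. (a dvd 1) \<longrightarrow> g a = series_eval S c (aassign \<delta> a)))"

definition delta_map_vec :: "setting \<Rightarrow> ('a::comm_ring_1 \<Rightarrow> 'a) \<Rightarrow> ('a \<Rightarrow> 'a ^ 'm \<Rightarrow> 'a ^ 'm) \<Rightarrow> bool" where
  "delta_map_vec S \<delta> \<beta> \<longleftrightarrow> (\<forall>j. delta_fun S \<delta> (\<lambda>a b. \<beta> a b $ j))"

definition delta_map_mat :: "setting \<Rightarrow> ('a::comm_ring_1 \<Rightarrow> 'a) \<Rightarrow> ('a \<Rightarrow> 'a ^ 'm ^ 'm) \<Rightarrow> bool" where
  "delta_map_mat S \<delta> \<psi> \<longleftrightarrow> (\<forall>i j. delta_fun1 S \<delta> (\<lambda>a. \<psi> a $ i $ j))"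

definition delta_hom :: "setting \<Rightarrow> ('a::comm_ring_1 \<Rightarrow> 'a) \<Rightarrow> ('a \<Rightarrow> 'a ^ 'm ^ 'm) \<Rightarrow> bool" where
  "delta_hom S \<delta> \<psi> \<longleftrightarrow> delta_map_mat S \<delta> \<psi> \<and>
     (\<forall>a1 a2. (a1 dvd 1) \<and> (a2 dvd 1) \<longrightarrow> \<psi> (a1 * a2) = \<psi> a1 + \<psi> a2)"

end

theory Submission
  imports Defs
begin

text \<open>Setting \<open>a\<^sub>1 = 1\<close> in the cocycle identity shows that \<open>\<gamma> b = \<beta>(1, b) - (b \<lambda>\<^sup>t) b\<close> is additive
  and reduces \<open>\<beta>\<close> to \<open>\<beta>(a, 0) = (1 - a) \<mu>\<close>, \<open>\<gamma>\<close> and \<open>\<psi>\<close>; comparing two expressions for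
  \<open>\<beta>(c, c b)\<close> gives \<open>\<gamma>(c b) = c \<gamma>(b) - c b \<psi>(c)\<close>. Hence every entry \<open>h\<close> of
  \<open>x \<gamma>(e\<^sub>j) - \<gamma>(x e\<^sub>j)\<close> is additive, satisfies the Leibniz rule for units, and
  \<open>h(c) = c \<psi>(c)\<^sub>j\<^sub>k\<close>. In the arithmetic setting such an \<open>h\<close> vanishes, because every unit is
  a \<open>p\<close>-th power modulo \<open>p\<close> and \<open>R\<close> is \<open>p\<close>-adically separated. In the algebraic setting \<open>h\<close> is a
  derivation which is a \<open>\<delta>\<close>-polynomial; evaluating it along \<open>1 + n s\<close> shows that it is a
  linear differential operator with constant coefficients, and testing it on the powers of a
  nonzero solution of \<open>\<delta> y = y\<close> shows that it is a constant multiple of \<open>\<delta>\<close>.\<close>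

section \<open>Units, vectors and derivations\<close>

lemma unit_mult_uinv:
  assumes "(a::'a::idom) dvd 1"
  shows "a * uinv a = 1"
proof -
  obtain b where b: "a * b = 1"
    using assms by (metis dvdE)
  have "uinv a = b"
    unfolding uinv_def
  proof (rule the_equality)
    show "a * b = 1" by (fact b)
  next
    fix c assume c: "a * c = 1"
    have "c = c * (a * b)" using b by simp
    also have "\<dots> = (a * c) * b" by (simp only: ac_simps)
    finally show "c = b" using c by simp
  qed
  with b show ?thesis by simp
qed

lemma uinv_mult_unit: "(a::'a::idom) dvd 1 \<Longrightarrow> uinv a * a = 1"
  using unit_mult_uinv by (simp add: mult.commute)

lemma uinv_1 [simp]: "uinv (1::'a::idom) = 1"
  using unit_mult_uinv[of "1::'a"] by simp

lemma vdot_add_left: "vdot (x + y) l = vdot x l + vdot y l"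
  unfolding vdot_def by (simp add: sum.distrib distrib_right)

lemma vdot_scale_left: "vdot (c *s x) l = c * vdot x l"
  unfolding vdot_def by (simp add: sum_distrib_left mult.assoc)

lemma vdot_zero_left [simp]: "vdot 0 l = 0"
  unfolding vdot_def by simp

lemma vector_matrix_mult_scalar_left: "(c *s x) v* M = c *s (x v* (M::'a::comm_ring_1^'n^'m))"
  unfolding vector_matrix_mult_def by (vector sum_distrib_left mult.assoc)

lemma axis_vector_matrix_mult: "(axis j 1 v* M) $ k = (M::'a::comm_ring_1^'n^'m) $ j $ k"
proof -
  have "(\<Sum>i\<in>UNIV. axis j 1 $ i * M $ i $ k) = (\<Sum>i\<in>UNIV. if i = j then M $ i $ k else 0)"
    by (rule sum.cong) (auto simp: axis_def)
  then show ?thesis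
    unfolding vector_matrix_mult_def by simp
qed

definition unit_derivation :: "('a::comm_ring_1 \<Rightarrow> 'a) \<Rightarrow> bool" where
  "unit_derivation h \<longleftrightarrow> Modules.additive h \<and> (\<forall>c y. c dvd 1 \<longrightarrow> h (c * y) = c * h y + y * h c)"

definition is_derivation :: "('a::comm_ring_1 \<Rightarrow> 'a) \<Rightarrow> bool" where
  "is_derivation \<delta> \<longleftrightarrow> Modules.additive \<delta> \<and> (\<forall>x y. \<delta> (x * y) = x * \<delta> y + y * \<delta> x)"

lemma unit_derivation_additive: "unit_derivation h \<Longrightarrow> Modules.additive h"
  by (simp add: unit_derivation_def)

lemma unit_derivation_unit_mult:
  "unit_derivation h \<Longrightarrow> c dvd 1 \<Longrightarrow> h (c * y) = c * h y + y * h c"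
  by (simp add: unit_derivation_def)

lemma unit_derivation_1:
  assumes "unit_derivation h"
  shows "h 1 = 0"
  using unit_derivation_unit_mult[OF assms, of 1 1] by simp

lemma additive_of_nat_mult:
  assumes "Modules.additive (h :: 'a::comm_ring_1 \<Rightarrow> 'a)"
  shows "h (of_nat n * x) = of_nat n * h x"
  by (induction n) (simp_all add: additive.zero[OF assms] additive.add[OF assms] distrib_right)

lemma unit_derivation_power:
  assumes h: "unit_derivation h" and z: "z dvd 1"
  shows "h (z ^ Suc n) = of_nat (Suc n) * z ^ n * h z"
proof (induction n)
  case (Suc n)
  have "h (z ^ Suc (Suc n)) = z * h (z ^ Suc n) + z ^ Suc n * h z"
    using unit_derivation_unit_mult[OF h z] by simp
  with Suc show ?case by (simp add: algebra_simps)
qed simp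

lemma is_derivation_additive: "is_derivation \<delta> \<Longrightarrow> Modules.additive \<delta>"
  by (simp add: is_derivation_def)

lemma is_derivation_mult: "is_derivation \<delta> \<Longrightarrow> \<delta> (x * y) = x * \<delta> y + y * \<delta> x"
  by (simp add: is_derivation_def)

lemma is_derivation_unit_derivation: "is_derivation \<delta> \<Longrightarrow> unit_derivation \<delta>"
  unfolding is_derivation_def unit_derivation_def by blast

lemma additive_funpow:
  fixes f :: "'a::ab_group_add \<Rightarrow> 'a"
  shows "Modules.additive f \<Longrightarrow> Modules.additive (f ^^ n)"
  by (induction n) (auto simp: Modules.additive_def)

lemma is_derivation_1: "is_derivation \<delta> \<Longrightarrow> \<delta> 1 = 0"
  by (rule unit_derivation_1[OF is_derivation_unit_derivation])

lemma funpow_derivation_affine: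
  assumes \<delta>: "is_derivation \<delta>"
  shows "(\<delta> ^^ Suc i) (1 + of_nat n * s) = of_nat n * (\<delta> ^^ Suc i) s"
proof -
  have add: "Modules.additive \<delta>"
    by (rule is_derivation_additive[OF \<delta>])
  have "\<delta> (1 + of_nat n * s) = \<delta> 1 + \<delta> (of_nat n * s)"
    by (rule additive.add[OF add])
  also have "\<dots> = of_nat n * \<delta> s"
    by (simp add: is_derivation_1[OF \<delta>] additive_of_nat_mult[OF add])
  finally have "\<delta> (1 + of_nat n * s) = of_nat n * \<delta> s" .
  then show ?thesis
    by (simp add: funpow_Suc_right additive_of_nat_mult[OF additive_funpow[OF add]] del: funpow.simps)
qed

lemma is_derivation_uinv_mult:
  fixes \<delta> :: "'a::idom \<Rightarrow> 'a"
  assumes \<delta>: "is_derivation \<delta>" and a: "a dvd 1"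
  shows "a * \<delta> (uinv a * y) = \<delta> y - uinv a * y * \<delta> a"
proof -
  have ua: "uinv a * a = 1" by (rule uinv_mult_unit[OF a])
  have "uinv a * \<delta> a + a * \<delta> (uinv a) = 0"
    using is_derivation_mult[OF \<delta>, of "uinv a" a] is_derivation_1[OF \<delta>] ua by simp
  then have "a * \<delta> (uinv a) = - (uinv a * \<delta> a)"
    by (simp add: eq_neg_iff_add_eq_0 add.commute)
  moreover have "a * \<delta> (uinv a * y) = a * uinv a * \<delta> y + y * (a * \<delta> (uinv a))"
    using is_derivation_mult[OF \<delta>, of "uinv a" y] by (simp add: algebra_simps)
  ultimately show ?thesis
    using ua by (simp add: algebra_simps)
qed

section \<open>The cocycle identity\<close>

locale beta_cocycle =
  fixes \<beta> :: "'a::idom \<Rightarrow> 'a ^ 'm \<Rightarrow> 'a ^ 'm"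
    and \<psi> :: "'a \<Rightarrow> 'a ^ 'm ^ 'm"
    and lam :: "'a ^ 'm"
  assumes psi_mult: "\<And>a1 a2. a1 dvd 1 \<Longrightarrow> a2 dvd 1 \<Longrightarrow> \<psi> (a1 * a2) = \<psi> a1 + \<psi> a2"
    and cocycle: "\<And>a1 a2 b1 b2. a1 dvd 1 \<Longrightarrow> a2 dvd 1 \<Longrightarrow>
        \<beta> (a1 * a2) (b1 + a1 *s b2) =
          \<beta> a1 b1 + a1 *s \<beta> a2 b2 + b1 v* \<psi> a2
          + (uinv a2 * vdot b2 lam) *s b1
          + (uinv a2 * vdot b1 lam) *s b2
          + (uinv a1 * (uinv a2 - 1) * vdot b1 lam) *s b1"
begin

definition gamma :: "'a ^ 'm \<Rightarrow> 'a ^ 'm" where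
  "gamma b = \<beta> 1 b - vdot b lam *s b"

text \<open>The failure of \<open>gamma\<close> to be linear, read off along the coordinate axes.\<close>
definition defect :: "'m \<Rightarrow> 'm \<Rightarrow> 'a \<Rightarrow> 'a" where
  "defect j k x = (x *s gamma (axis j 1) - gamma (x *s axis j 1)) $ k"

lemma psi_1: "\<psi> 1 = 0"
  using psi_mult[of 1 1] by simp

lemma additive_gamma: "Modules.additive gamma"
proof
  fix x y
  show "gamma (x + y) = gamma x + gamma y"
    using cocycle[of 1 1 x y] by (simp add: gamma_def psi_1 vec_eq_iff algebra_simps vdot_add_left)
qed

lemma beta_decompose:
  "a dvd 1 \<Longrightarrow> \<beta> a b = \<beta> 1 b + \<beta> a 0 + b v* \<psi> a + ((uinv a - 1) * vdot b lam) *s b"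
  using cocycle[of 1 a b 0] by simp

text \<open>\<open>a \<mapsto> \<beta> a 0\<close> is a cocycle for the scaling action; comparing \<open>a \<cdot> (-1)\<close> with
  \<open>(-1) \<cdot> a\<close> shows that it is a coboundary once \<open>2\<close> is invertible.\<close>
lemma beta_zero_coboundary:
  assumes two: "(2::'a) dvd 1"
  obtains \<mu> where "\<And>a. a dvd 1 \<Longrightarrow> \<beta> a 0 = (1 - a) *s \<mu>"
proof
  fix a :: 'a assume a: "a dvd 1"
  have cocycle_0: "\<beta> (a1 * a2) 0 = \<beta> a1 0 + a1 *s \<beta> a2 0" if "a1 dvd 1" "a2 dvd 1" for a1 a2
    using cocycle[OF that, of 0 0] by simp
  have "\<beta> a 0 + a *s \<beta> (-1) 0 = \<beta> (-1) 0 + (-1) *s \<beta> a 0"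
    using cocycle_0[OF a, of "-1"] cocycle_0[of "-1" a] a by (simp add: mult.commute)
  then have "2 *s \<beta> a 0 = (1 - a) *s \<beta> (-1) 0"
    by (simp add: vec_eq_iff algebra_simps)
  then have "uinv 2 *s (2 *s \<beta> a 0) = uinv 2 *s ((1 - a) *s \<beta> (-1) 0)"
    by simp
  moreover have "2 * (uinv 2 * x) = x" for x :: 'a
    using unit_mult_uinv[OF two] by (metis mult.assoc mult_1)
  ultimately show "\<beta> a 0 = (1 - a) *s (uinv 2 *s \<beta> (-1) 0)"
    by (simp add: vec_eq_iff algebra_simps)
qed

lemma beta_normal_form:
  assumes "(2::'a) dvd 1"
  obtains \<mu> where "\<And>a b. a dvd 1 \<Longrightarrow>
    \<beta> a b = (1 - a) *s \<mu> + (uinv a * vdot b lam) *s b + gamma b + b v* \<psi> a"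
proof -
  obtain \<mu> where \<mu>: "\<And>a. a dvd 1 \<Longrightarrow> \<beta> a 0 = (1 - a) *s \<mu>"
    using beta_zero_coboundary[OF assms] by blast
  show ?thesis
  proof
    fix a b assume a: "(a::'a) dvd 1"
    show "\<beta> a b = (1 - a) *s \<mu> + (uinv a * vdot b lam) *s b + gamma b + b v* \<psi> a"
      unfolding beta_decompose[OF a, of b] \<mu>[OF a] gamma_def by (simp add: vec_eq_iff algebra_simps)
  qed
qed

text \<open>Compute \<open>\<beta> c (c b)\<close> once from the cocycle identity at \<open>(c, 0), (1, b)\<close> and once
  by \<open>beta_decompose\<close>.\<close>
lemma gamma_scale:
  assumes c: "c dvd 1"
  shows "gamma (c *s b) = c *s gamma b - c *s (b v* \<psi> c)"
proof -
  have cc: "c * (uinv c * x) = x" for x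
    using unit_mult_uinv[OF c] by (metis mult.assoc mult_1)
  have "\<beta> c (c *s b) = \<beta> c 0 + c *s \<beta> 1 b"
    using cocycle[OF c, of 1 0 b] psi_1 by simp
  moreover have "\<beta> c (c *s b) = \<beta> 1 (c *s b) + \<beta> c 0 + (c *s b) v* \<psi> c
      + ((uinv c - 1) * (c * vdot b lam)) *s (c *s b)"
    using beta_decompose[OF c, of "c *s b"] by (simp add: vdot_scale_left)
  ultimately have "\<beta> 1 (c *s b) = c *s \<beta> 1 b - c *s (b v* \<psi> c)
      - ((uinv c - 1) * (c * vdot b lam)) *s (c *s b)"
    by (simp add: vec_eq_iff vector_matrix_mult_scalar_left algebra_simps)
  then show ?thesis
    unfolding gamma_def by (simp add: vec_eq_iff vdot_scale_left algebra_simps cc)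
qed

lemma defect_unit: "c dvd 1 \<Longrightarrow> defect j k c = c * \<psi> c $ j $ k"
  using gamma_scale[of c "axis j 1"] by (simp add: defect_def axis_vector_matrix_mult)

lemma unit_derivation_defect: "unit_derivation (defect j k)"
  unfolding unit_derivation_def
proof (intro conjI allI impI)
  show "Modules.additive (defect j k)"
    by unfold_locales (simp add: defect_def vector_sadd_rdistrib additive.add[OF additive_gamma] algebra_simps)
  fix c y :: 'a assume c: "c dvd 1"
  have "gamma ((c * y) *s axis j 1) $ k = c * gamma (y *s axis j 1) $ k - c * y * \<psi> c $ j $ k"
    using gamma_scale[OF c, of "y *s axis j 1"]
    by (simp add: vector_smult_assoc axis_vector_matrix_mult vector_matrix_mult_scalar_left)
  then show "defect j k (c * y) = c * defect j k y + y * defect j k c"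
    unfolding defect_unit[OF c] by (simp add: defect_def algebra_simps)
qed

lemma gamma_component:
  "gamma b $ k = (\<Sum>j\<in>UNIV. b $ j * gamma (axis j 1) $ k - defect j k (b $ j))"
proof -
  have "gamma b = (\<Sum>j\<in>UNIV. gamma (b $ j *s axis j 1))"
    using additive.sum[OF additive_gamma] by (metis basis_expansion)
  then show ?thesis
    by (simp add: defect_def)
qed

lemma normal_form_if_defect_zero:
  assumes two: "(2::'a) dvd 1" and defect_0: "\<And>j k x. defect j k x = 0"
  shows "(\<forall>a. a dvd 1 \<longrightarrow> \<psi> a = 0) \<and>
    (\<exists>\<mu> :: 'a ^ 'm. \<exists>\<nu> :: 'a ^ 'm ^ 'm. \<forall>a b. a dvd 1 \<longrightarrow>
       \<beta> a b = (1 - a) *s \<mu> + (uinv a * vdot b lam) *s b + b v* \<nu>)"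
proof -
  have psi_0: "\<psi> a = 0" if a: "a dvd 1" for a
  proof -
    have "a \<noteq> 0" using a by auto
    with defect_unit[OF a] defect_0 show ?thesis by (simp add: vec_eq_iff)
  qed
  have gamma_linear: "gamma b = b v* (\<chi> j. gamma (axis j 1))" for b
    by (simp add: vec_eq_iff gamma_component[of b] defect_0 vector_matrix_mult_def)
  obtain \<mu> where \<mu>: "\<And>a b. a dvd 1 \<Longrightarrow>
      \<beta> a b = (1 - a) *s \<mu> + (uinv a * vdot b lam) *s b + gamma b + b v* \<psi> a"
    using beta_normal_form[OF two] by blast
  have "\<beta> a b = (1 - a) *s \<mu> + (uinv a * vdot b lam) *s b + b v* (\<chi> j. gamma (axis j 1))"
    if "a dvd 1" for a b
    using \<mu>[OF that, of b] psi_0[OF that] gamma_linear[of b] by simp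
  with psi_0 show ?thesis
    by blast
qed

lemma normal_form_if_defect_multiple_of_derivation:
  assumes two: "(2::'a) dvd 1" and \<delta>: "is_derivation \<delta>"
    and K: "\<And>j k x. defect j k x = K j k * \<delta> x"
  shows "\<exists>\<mu> :: 'a ^ 'm. \<exists>\<nu> \<eta> :: 'a ^ 'm ^ 'm. \<forall>a b. a dvd 1 \<longrightarrow>
    \<psi> a = (\<chi> i j. - (uinv a * \<delta> a) * \<nu> $ i $ j) \<and>
    \<beta> a b = (1 - a) *s \<mu> + (uinv a * vdot b lam) *s b + b v* \<eta>
      + a *s ((\<chi> j. \<delta> ((uinv a *s b) $ j)) v* \<nu>)"
proof -
  obtain \<mu> where \<mu>: "\<And>a b. a dvd 1 \<Longrightarrow>
      \<beta> a b = (1 - a) *s \<mu> + (uinv a * vdot b lam) *s b + gamma b + b v* \<psi> a"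
    using beta_normal_form[OF two] by blast
  define \<nu> :: "'a ^ 'm ^ 'm" where "\<nu> = (\<chi> j k. - K j k)"
  define \<eta> :: "'a ^ 'm ^ 'm" where "\<eta> = (\<chi> j. gamma (axis j 1))"
  have psi: "\<psi> a $ j $ k = uinv a * \<delta> a * K j k" if a: "a dvd 1" for a j k
  proof -
    have "a * \<psi> a $ j $ k = K j k * \<delta> a"
      using defect_unit[OF a] K by simp
    then have "uinv a * a * \<psi> a $ j $ k = uinv a * \<delta> a * K j k"
      by (simp add: ac_simps)
    then show ?thesis
      by (simp add: uinv_mult_unit[OF a])
  qed
  have gamma_psi: "gamma b + b v* \<psi> a = b v* \<eta> + a *s ((\<chi> j. \<delta> ((uinv a *s b) $ j)) v* \<nu>)"
    if a: "a dvd 1" for a b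
  proof (subst vec_eq_iff, intro allI)
    fix k
    have summand: "b $ j * \<eta> $ j $ k - K j k * \<delta> (b $ j) + b $ j * (uinv a * \<delta> a * K j k)
        = b $ j * \<eta> $ j $ k + a * \<delta> (uinv a * b $ j) * \<nu> $ j $ k" for j
      unfolding is_derivation_uinv_mult[OF \<delta> a] by (simp add: \<nu>_def algebra_simps)
    have "(gamma b + b v* \<psi> a) $ k = (\<Sum>j\<in>UNIV. b $ j * \<eta> $ j $ k - K j k * \<delta> (b $ j))
        + (\<Sum>j\<in>UNIV. b $ j * (uinv a * \<delta> a * K j k))"
      by (simp add: gamma_component[of b] K vector_matrix_mult_def psi[OF a] \<eta>_def)
    also have "\<dots> = (\<Sum>j\<in>UNIV. b $ j * \<eta> $ j $ k + a * \<delta> (uinv a * b $ j) * \<nu> $ j $ k)"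
      by (simp only: sum.distrib[symmetric] summand)
    also have "\<dots> = (b v* \<eta> + a *s ((\<chi> j. \<delta> ((uinv a *s b) $ j)) v* \<nu>)) $ k"
      by (simp add: vector_matrix_mult_def sum.distrib sum_distrib_left mult.assoc)
    finally show "(gamma b + b v* \<psi> a) $ k = (b v* \<eta> + a *s ((\<chi> j. \<delta> ((uinv a *s b) $ j)) v* \<nu>)) $ k" .
  qed
  show ?thesis
  proof (intro exI allI impI conjI)
    fix a b assume a: "(a::'a) dvd 1"
    show "\<psi> a = (\<chi> i j. - (uinv a * \<delta> a) * \<nu> $ i $ j)"
      by (simp add: vec_eq_iff psi[OF a] \<nu>_def)
    show "\<beta> a b = (1 - a) *s \<mu> + (uinv a * vdot b lam) *s b + b v* \<eta>
        + a *s ((\<chi> j. \<delta> ((uinv a *s b) $ j)) v* \<nu>)"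
      using \<mu>[OF a, of b] gamma_psi[OF a, of b] by (simp add: add.assoc)
  qed
qed

end

section \<open>The arithmetic setting\<close>

lemma delta_arith_settingD:
  assumes "delta_arith_setting p (\<delta> :: 'a::idom \<Rightarrow> 'a)"
  shows delta_arith_prime: "prime p"
    and delta_arith_odd: "odd p"
    and delta_arith_p_not_unit: "\<not> (of_nat p :: 'a) dvd 1"
    and delta_arith_factorization: "\<And>x::'a. x \<noteq> 0 \<Longrightarrow> \<exists>u k. u dvd 1 \<and> x = u * of_nat p ^ k"
    and delta_arith_separated: "\<And>x::'a. (\<And>k. of_nat p ^ k dvd x) \<Longrightarrow> x = 0"
    and delta_arith_root_mod_p:
      "\<And>q::'a poly. degree q \<ge> 1 \<Longrightarrow> lead_coeff q = 1 \<Longrightarrow> \<exists>x. of_nat p dvd poly q x"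
  using assms unfolding delta_arith_setting_def Let_def by (elim conjE; blast)+

lemma delta_arith_p_dvd_nonunit:
  fixes \<delta> :: "'a::idom \<Rightarrow> 'a" and x :: 'a
  assumes setting: "delta_arith_setting p \<delta>" and x: "\<not> x dvd 1"
  shows "of_nat p dvd x"
proof (cases "x = 0")
  case False
  then obtain u k where u: "u dvd 1" and x_eq: "x = u * of_nat p ^ k"
    using delta_arith_factorization[OF setting] by blast
  show ?thesis
  proof (cases k)
    case 0
    with u x x_eq show ?thesis by simp
  qed (simp add: x_eq)
qed simp

lemma delta_arith_nonunit_minus_1:
  fixes \<delta> :: "'a::idom \<Rightarrow> 'a" and x :: 'a
  assumes setting: "delta_arith_setting p \<delta>" and x: "\<not> x dvd 1"
  shows "(x - 1) dvd 1"
proof (rule ccontr)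
  assume "\<not> (x - 1) dvd 1"
  then have "of_nat p dvd x - (x - 1)"
    using delta_arith_p_dvd_nonunit[OF setting] x by (blast intro: dvd_diff)
  with delta_arith_p_not_unit[OF setting] show False by simp
qed

text \<open>The residue field is algebraically closed, so \<open>z ^ p = x\<close> is solvable modulo \<open>p\<close>.\<close>
lemma delta_arith_unit_power_mod_p:
  fixes \<delta> :: "'a::idom \<Rightarrow> 'a" and x :: 'a
  assumes setting: "delta_arith_setting p \<delta>" and x: "x dvd 1"
  obtains z w where "z dvd 1" and "x = z ^ p - of_nat p * w"
proof -
  let ?P = "of_nat p :: 'a"
  have p: "prime p" by (rule delta_arith_prime[OF setting])
  then obtain p' where p': "p = Suc p'"
    using prime_gt_0_nat gr0_implies_Suc by blast
  define q where "q = monom (1::'a) p + [:-x:]"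
  have "degree q = p"
    unfolding q_def p' by (simp add: degree_add_eq_left degree_monom_eq)
  moreover have "lead_coeff q = 1"
    unfolding calculation unfolding q_def p' by simp
  ultimately have "\<exists>z. ?P dvd poly q z"
    using delta_arith_root_mod_p[OF setting, of q] p' by simp
  then obtain z where "?P dvd poly q z" ..
  then obtain w where w: "z ^ p - x = ?P * w"
    unfolding q_def by (auto simp: poly_monom elim: dvdE)
  have x_eq: "x = z ^ p - ?P * w"
    unfolding w[symmetric] by simp
  have "z dvd 1"
  proof (rule ccontr)
    assume "\<not> z dvd 1"
    then have "?P dvd z"
      by (rule delta_arith_p_dvd_nonunit[OF setting])
    moreover have "z dvd z ^ p"
      using p' by simp
    ultimately have "?P dvd z ^ p"
      by (rule dvd_trans)
    then have "?P dvd x"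
      unfolding x_eq by (rule dvd_diff[OF _ dvd_triv_left])
    then have "?P dvd 1"
      using x by (rule dvd_trans)
    with delta_arith_p_not_unit[OF setting] show False by simp
  qed
  then show thesis
    using x_eq by (rule that)
qed

lemma delta_arith_two_unit:
  fixes \<delta> :: "'a::idom \<Rightarrow> 'a"
  assumes setting: "delta_arith_setting p \<delta>"
  shows "(2::'a) dvd 1"
proof (rule ccontr)
  assume "\<not> (2::'a) dvd 1"
  then have "of_nat p dvd (2::'a)"
    by (rule delta_arith_p_dvd_nonunit[OF setting])
  obtain q where "p = 2 * q + 1"
    using delta_arith_odd[OF setting] by (blast elim: oddE)
  have "(of_nat p :: 'a) dvd of_nat p - 2 * of_nat q"
    by (rule dvd_diff[OF dvd_refl dvd_mult2]) fact
  also have "(of_nat p :: 'a) - 2 * of_nat q = 1"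
    using \<open>p = 2 * q + 1\<close> by simp
  finally show False
    using delta_arith_p_not_unit[OF setting] by simp
qed

text \<open>Every unit is a \<open>p\<close>-th power modulo \<open>p\<close> and \<open>h (z ^ p) = p z ^ (p - 1) h z\<close>,
  so the values of \<open>h\<close> are divisible by every power of \<open>p\<close>.\<close>
lemma unit_derivation_eq_0_arith:
  fixes \<delta> h :: "'a::idom \<Rightarrow> 'a"
  assumes setting: "delta_arith_setting p \<delta>" and h: "unit_derivation h"
  shows "h x = 0"
proof -
  let ?P = "of_nat p :: 'a"
  have add: "Modules.additive h" by (rule unit_derivation_additive[OF h])
  obtain p' where p': "p = Suc p'"
    using delta_arith_prime[OF setting] by (metis prime_gt_0_nat gr0_implies_Suc)
  have "?P ^ k dvd h x" for k x
  proof (induction k arbitrary: x)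
    case (Suc k)
    have unit_case: "?P ^ Suc k dvd h y" if y_unit: "y dvd 1" for y
    proof -
      obtain z w where z: "z dvd 1" and y: "y = z ^ p - ?P * w"
        using delta_arith_unit_power_mod_p[OF setting y_unit] by blast
      have hy: "h y = ?P * (z ^ p' * h z - h w)"
        unfolding y additive.diff[OF add] additive_of_nat_mult[OF add]
        using unit_derivation_power[OF h z, of p'] p' by (simp add: algebra_simps)
      have "?P ^ k dvd z ^ p' * h z - h w"
        using Suc.IH by (simp add: dvd_diff)
      then show ?thesis
        unfolding hy power_Suc by (rule mult_dvd_mono[OF dvd_refl])
    qed
    show ?case
    proof (cases "x dvd 1")
      case False
      have "h x = h (x - 1)"
        using additive.diff[OF add, of x 1] unit_derivation_1[OF h] by simp
      with unit_case[OF delta_arith_nonunit_minus_1[OF setting False]] show ?thesis by simp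
    qed (rule unit_case)
  qed simp
  then show ?thesis
    by (rule delta_arith_separated[OF setting])
qed

section \<open>The algebraic setting\<close>

lemma delta_alg_unit: "delta_alg_setting \<delta> \<Longrightarrow> x \<noteq> 0 \<Longrightarrow> x dvd 1"
  for \<delta> :: "'a::idom \<Rightarrow> 'a" and x :: 'a
  unfolding delta_alg_setting_def by simp

lemma delta_alg_of_nat_Suc: "delta_alg_setting (\<delta> :: 'a::idom \<Rightarrow> 'a) \<Longrightarrow> of_nat (Suc k) \<noteq> (0::'a)"
  unfolding delta_alg_setting_def by simp

lemma delta_alg_derivation: "delta_alg_setting \<delta> \<Longrightarrow> is_derivation \<delta>"
  unfolding delta_alg_setting_def is_derivation_def Modules.additive_def by simp

lemma delta_alg_closed:
  assumes "delta_alg_setting (\<delta> :: 'a::idom \<Rightarrow> 'a)" and "dpoly cf" and "dpoly cg"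
    and "dp_vars cf \<noteq> {}" and "\<exists>e. cg e \<noteq> 0" and "\<forall>i\<in>dp_vars cg. i < Max (dp_vars cf)"
  shows "\<exists>y. dp_eval \<delta> cf y = 0 \<and> dp_eval \<delta> cg y \<noteq> 0"
  using assms(1) unfolding delta_alg_setting_def using assms(2-) by blast

lemma inj_of_nat_if_of_nat_Suc_neq_0:
  assumes "\<And>k. of_nat (Suc k) \<noteq> (0::'a::ring_1)"
  shows "inj (of_nat :: nat \<Rightarrow> 'a)"
proof (rule injI)
  have neq: "of_nat m \<noteq> (of_nat n :: 'a)" if "m < n" for m n
  proof
    assume "of_nat m = (of_nat n :: 'a)"
    moreover have "(of_nat n :: 'a) = of_nat m + of_nat (Suc (n - m - 1))"
      using that by (simp flip: of_nat_add)
    ultimately show False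
      using assms by simp
  qed
  fix m n assume "(of_nat m :: 'a) = of_nat n"
  then show "m = n"
    using neq[of m n] neq[of n m] by (metis linorder_neqE_nat)
qed

text \<open>The axiom of \<open>\<delta>\<close>-closedness, applied to \<open>f = \<delta> y - y\<close> and \<open>g = y\<close>.\<close>
lemma delta_alg_exp_exists:
  assumes "delta_alg_setting (\<delta> :: 'a::idom \<Rightarrow> 'a)"
  obtains y where "\<delta> y = y" and "y \<noteq> 0"
proof -
  define E0 :: "nat \<Rightarrow> nat" where "E0 = (\<lambda>i. if i = 0 then 1 else 0)"
  define E1 :: "nat \<Rightarrow> nat" where "E1 = (\<lambda>i. if i = 1 then 1 else 0)"
  have ne: "E1 \<noteq> E0"
    unfolding E0_def E1_def by (metis zero_neq_one)
  define cf :: "(nat \<Rightarrow> nat) \<Rightarrow> 'a" where "cf = (\<lambda>e. if e = E1 then 1 else if e = E0 then -1 else 0)"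
  define cg :: "(nat \<Rightarrow> nat) \<Rightarrow> 'a" where "cg = (\<lambda>e. if e = E0 then 1 else 0)"
  have supp_f: "{e. cf e \<noteq> 0} = {E1, E0}" and supp_g: "{e. cg e \<noteq> 0} = {E0}"
    unfolding cf_def cg_def using ne by auto
  have vars0: "{i. E0 i \<noteq> 0} = {0}" and vars1: "{i. E1 i \<noteq> 0} = {1}"
    unfolding E0_def E1_def by auto
  have cf_iff: "cf e \<noteq> 0 \<longleftrightarrow> e = E1 \<or> e = E0" and cg_iff: "cg e \<noteq> 0 \<longleftrightarrow> e = E0" for e
    using supp_f supp_g by blast+
  have "dp_vars cf = {i. E1 i \<noteq> 0} \<union> {i. E0 i \<noteq> 0}"
    unfolding dp_vars_def cf_iff by blast
  moreover have "dp_vars cg = {i. E0 i \<noteq> 0}"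
    unfolding dp_vars_def cg_iff by blast
  ultimately have "dp_vars cf = {0, 1}" and "dp_vars cg = {0}"
    unfolding vars0 vars1 by auto
  moreover have "dpoly cf" and "dpoly cg"
    unfolding dpoly_def supp_f supp_g cf_iff cg_iff using vars0 vars1 by auto
  moreover have "cg E0 \<noteq> 0"
    unfolding cg_def by simp
  ultimately have "\<exists>y. dp_eval \<delta> cf y = 0 \<and> dp_eval \<delta> cg y \<noteq> 0"
    by (intro delta_alg_closed[OF assms]) auto
  then obtain y where y: "dp_eval \<delta> cf y = 0" "dp_eval \<delta> cg y \<noteq> 0"
    by blast
  have mon0: "mon_eval E0 x = x 0" and mon1: "mon_eval E1 x = x 1" for x :: "nat \<Rightarrow> 'a"
    unfolding mon_eval_def vars0 vars1 by (simp_all add: E0_def E1_def)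
  have "dp_eval \<delta> cf y = \<delta> y - y"
    unfolding dp_eval_def supp_f using ne by (simp add: cf_def mon0 mon1)
  moreover have "dp_eval \<delta> cg y = y"
    unfolding dp_eval_def supp_g by (simp add: cg_def mon0)
  ultimately show thesis
    using y that by simp
qed

lemma poly_eq_0_if_cofinite_nat_roots:
  assumes inj: "inj (of_nat :: nat \<Rightarrow> 'a::idom)" and B: "finite B"
    and roots: "\<And>n. n \<notin> B \<Longrightarrow> poly Q (of_nat n :: 'a) = 0"
  shows "Q = 0"
proof (rule ccontr)
  assume "Q \<noteq> 0"
  then have "finite {x. poly Q x = 0}"
    by (rule poly_roots_finite)
  moreover have "of_nat ` (UNIV - B) \<subseteq> {x. poly Q x = 0}"
    using roots by auto
  ultimately have "finite (UNIV - B)"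
    using inj by (meson finite_imageD finite_subset inj_on_subset subset_UNIV)
  with B show False
    by (simp add: Diff_infinite_finite)
qed

lemma coeff_mult_1: "coeff (p * q) 1 = coeff p 0 * coeff q 1 + coeff p 1 * coeff (q::'a::comm_ring_1 poly) 0"
  by (simp add: coeff_mult atMost_Suc)

lemma coeff_power_1: "coeff (p ^ k) 1 = of_nat k * coeff p 0 ^ (k - 1) * coeff (p::'a::comm_ring_1 poly) 1"
proof (induction k)
  case (Suc k)
  then show ?case
    by (cases k) (simp_all add: coeff_mult_1[unfolded One_nat_def] coeff_0_power coeff_mult_0 algebra_simps)
qed simp

lemma coeff_prod_0: "coeff (\<Prod>i\<in>I. f i) 0 = (\<Prod>i\<in>I. coeff (f i) 0 :: 'a::comm_ring_1)"
  by (induction I rule: infinite_finite_induct) (simp_all add: coeff_mult_0)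

lemma coeff_prod_1:
  assumes "finite I"
  shows "coeff (\<Prod>i\<in>I. f i) 1 = (\<Sum>i\<in>I. coeff (f i) 1 * (\<Prod>j\<in>I - {i}. coeff (f j) 0 :: 'a::comm_ring_1))"
  using assms
proof induction
  case (insert a I)
  have "insert a I - {i} = insert a (I - {i})" if "i \<in> I" for i
    using insert that by auto
  then have "(\<Prod>j\<in>insert a I - {i}. coeff (f j) 0) = coeff (f a) 0 * (\<Prod>j\<in>I - {i}. coeff (f j) 0)"
    if "i \<in> I" for i
    using insert that by simp
  moreover have "insert a I - {a} = I"
    using insert by auto
  ultimately show ?case
    using insert by (simp add: coeff_mult_1[unfolded One_nat_def] coeff_prod_0 sum_distrib_left algebra_simps)
qed simp

text \<open>\<open>0 ^ n\<close> is the indicator of \<open>n = 0\<close>: only the monomials of total degree at most one in the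
  \<open>d i\<close> contribute.\<close>
lemma coeff_1_line_product:
  assumes "finite I"
  shows "coeff ([:1, s:] ^ k * (\<Prod>i\<in>I. [:0, d i:] ^ e i)) 1 =
    (\<Sum>i\<in>I. of_nat (e i) * 0 ^ (e i - 1) * (\<Prod>j\<in>I - {i}. 0 ^ e j) * d i)
      + of_nat k * s * (\<Prod>i\<in>I. (0::'a::comm_ring_1) ^ e i)"
proof -
  have "coeff (\<Prod>i\<in>I. [:0, d i:] ^ e i) 1 = (\<Sum>i\<in>I. of_nat (e i) * 0 ^ (e i - 1) * (\<Prod>j\<in>I - {i}. 0 ^ e j) * d i)"
    unfolding coeff_prod_1[OF assms]
    by (rule sum.cong) (simp_all add: coeff_power_1[unfolded One_nat_def] coeff_0_power algebra_simps)
  then show ?thesis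
    by (simp add: coeff_mult_1[unfolded One_nat_def] coeff_prod_0 coeff_0_power
        coeff_power_1[unfolded One_nat_def])
qed

lemma mon_eval_avar:
  assumes "\<And>v. e v \<noteq> 0 \<Longrightarrow> avar_ord v \<le> m"
  shows "mon_eval e x = x AInv ^ e AInv * (\<Prod>i\<le>m. x (AD i) ^ e (AD i))"
proof -
  define V where "V = insert AInv (AD ` {..m})"
  have "{v. e v \<noteq> 0} \<subseteq> V"
  proof
    fix v assume "v \<in> {v. e v \<noteq> 0}"
    then show "v \<in> V"
      using assms[of v] unfolding V_def by (cases v) auto
  qed
  then have "mon_eval e x = (\<Prod>v\<in>V. x v ^ e v)"
    unfolding mon_eval_def by (intro prod.mono_neutral_left) (auto simp: V_def)
  also have "\<dots> = x AInv ^ e AInv * (\<Prod>v\<in>AD ` {..m}. x v ^ e v)"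
    unfolding V_def by (subst prod.insert) auto
  also have "(\<Prod>v\<in>AD ` {..m}. x v ^ e v) = (\<Prod>i\<le>m. x (AD i) ^ e (AD i))"
    by (subst prod.reindex) (auto simp: inj_on_def)
  finally show ?thesis .
qed

text \<open>A monomial in \<open>a\<inverse>, a, \<delta> a, \<dots>, \<delta>\<^sup>m a\<close> evaluated along \<open>a = 1 + n s\<close>, with
  the powers of \<open>a\<inverse>\<close> cleared, is a polynomial in \<open>n\<close>.\<close>
lemma mon_eval_line:
  fixes \<delta> :: "'a::idom \<Rightarrow> 'a"
  assumes \<delta>: "is_derivation \<delta>" and ord: "\<And>v. e v \<noteq> 0 \<Longrightarrow> avar_ord v \<le> m"
    and N: "e AInv \<le> N" and u: "u dvd 1" and u_eq: "u = 1 + of_nat n * s"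
  shows "u ^ (N + 1) * mon_eval e (aassign \<delta> u) =
    u ^ (N + 1 - e AInv + e (AD 0)) * (\<Prod>i\<in>{1..m}. (of_nat n * (\<delta> ^^ i) s) ^ e (AD i))"
proof -
  have "(\<delta> ^^ i) u = of_nat n * (\<delta> ^^ i) s" if i: "i \<in> {1..m}" for i
  proof -
    obtain i' where "i = Suc i'"
      using i by (cases i) auto
    then show ?thesis
      unfolding u_eq by (simp only: funpow_derivation_affine[OF \<delta>])
  qed
  moreover have "{..m} = insert 0 {1..m}"
    by auto
  ultimately have "(\<Prod>i\<le>m. (\<delta> ^^ i) u ^ e (AD i)) =
      u ^ e (AD 0) * (\<Prod>i\<in>{1..m}. (of_nat n * (\<delta> ^^ i) s) ^ e (AD i))"
    by simp
  then have "mon_eval e (aassign \<delta> u) =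
      uinv u ^ e AInv * (u ^ e (AD 0) * (\<Prod>i\<in>{1..m}. (of_nat n * (\<delta> ^^ i) s) ^ e (AD i)))"
    by (simp add: mon_eval_avar[OF ord])
  moreover have "u ^ (N + 1) = u ^ (N + 1 - e AInv) * u ^ e AInv"
    using N by (simp flip: power_add)
  moreover have "u ^ e AInv * uinv u ^ e AInv = 1"
    using unit_mult_uinv[OF u] by (simp flip: power_mult_distrib)
  moreover have "u ^ (N + 1 - e AInv + e (AD 0)) = u ^ (N + 1 - e AInv) * u ^ e (AD 0)"
    by (simp add: power_add)
  ultimately show ?thesis
    by (simp add: algebra_simps)
qed

lemma inj_mult_of_nat:
  assumes "inj (of_nat :: nat \<Rightarrow> 'a::idom)" and "s \<noteq> 0"
  shows "inj (\<lambda>n. of_nat n * s :: 'a)"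
  using assms by (auto simp: inj_def)

text \<open>Clearing denominators in \<open>h (1 + n s) = n h s\<close> gives a polynomial identity in \<open>n\<close>; its
  coefficient of \<open>n\<close> expresses \<open>h s\<close>.\<close>
lemma additive_delta_polynomial_eq_coeff:
  fixes h \<delta> :: "'a::idom \<Rightarrow> 'a" and cf :: "(avar \<Rightarrow> nat) \<Rightarrow> 'a"
  assumes inj: "inj (of_nat :: nat \<Rightarrow> 'a)" and unit: "\<And>x::'a. x \<noteq> 0 \<Longrightarrow> x dvd 1"
    and \<delta>: "is_derivation \<delta>" and add: "Modules.additive h" and h1: "h 1 = 0"
    and ord: "\<forall>e v. cf e \<noteq> 0 \<and> e v \<noteq> 0 \<longrightarrow> avar_ord v \<le> m"
    and N: "\<And>e. cf e \<noteq> 0 \<Longrightarrow> e AInv \<le> N"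
    and rep: "\<And>c. c \<noteq> 0 \<Longrightarrow> h c = c * (\<Sum>e\<in>{e. cf e \<noteq> 0}. cf e * mon_eval e (aassign \<delta> c))"
    and s: "s \<noteq> 0"
  shows "h s = (\<Sum>e\<in>{e. cf e \<noteq> 0}. cf e * coeff ([:1, s:] ^ (N + 1 - e AInv + e (AD 0))
    * (\<Prod>i\<in>{1..m}. [:0, (\<delta> ^^ i) s:] ^ e (AD i))) 1)"
proof -
  define E where "E = {e. cf e \<noteq> 0}"
  define A where "A e = [:1, s:] ^ (N + 1 - e AInv + e (AD 0)) * (\<Prod>i\<in>{1..m}. [:0, (\<delta> ^^ i) s:] ^ e (AD i))"
    for e
  define Q where "Q = (\<Sum>e\<in>E. smult (cf e) (A e)) - [:1, s:] ^ N * [:0, h s:]"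
  have roots: "poly Q (of_nat n) = 0" if "n \<notin> (\<lambda>n. of_nat n * s) -` {-1}" for n
  proof -
    define u where "u = 1 + of_nat n * s"
    have u0: "u \<noteq> 0"
      using that unfolding u_def by (auto simp: add_eq_0_iff)
    have "u ^ N * h u = (\<Sum>e\<in>E. cf e * (u ^ (N + 1) * mon_eval e (aassign \<delta> u)))"
      using rep[OF u0] unfolding E_def by (simp add: sum_distrib_left algebra_simps)
    also have "\<dots> = poly (\<Sum>e\<in>E. smult (cf e) (A e)) (of_nat n)"
      unfolding poly_sum
    proof (rule sum.cong[OF refl])
      fix e assume "e \<in> E"
      then have cf: "cf e \<noteq> 0"
        by (simp add: E_def)
      have ord_e: "avar_ord v \<le> m" if "e v \<noteq> 0" for v
        using ord cf that by blast
      have "u ^ (N + 1) * mon_eval e (aassign \<delta> u) =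
          u ^ (N + 1 - e AInv + e (AD 0)) * (\<Prod>i\<in>{1..m}. (of_nat n * (\<delta> ^^ i) s) ^ e (AD i))"
        by (rule mon_eval_line[where e = e, OF \<delta> ord_e N[OF cf] unit[OF u0] u_def])
      then have "cf e * (u ^ (N + 1) * mon_eval e (aassign \<delta> u)) =
          cf e * (u ^ (N + 1 - e AInv + e (AD 0)) * (\<Prod>i\<in>{1..m}. (of_nat n * (\<delta> ^^ i) s) ^ e (AD i)))"
        by (simp only:)
      also have "\<dots> = poly (smult (cf e) (A e)) (of_nat n)"
        by (simp add: A_def poly_prod u_def algebra_simps)
      finally show "cf e * (u ^ (N + 1) * mon_eval e (aassign \<delta> u)) = poly (smult (cf e) (A e)) (of_nat n)" .
    qed
    finally have "poly (\<Sum>e\<in>E. smult (cf e) (A e)) (of_nat n) = u ^ N * h u" ..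
    moreover have "h u = of_nat n * h s"
      unfolding u_def additive.add[OF add] h1 additive_of_nat_mult[OF add] by simp
    ultimately show ?thesis
      unfolding Q_def by (simp add: u_def algebra_simps)
  qed
  have "finite ((\<lambda>n. of_nat n * s) -` {-1})"
    by (rule finite_vimageI) (simp_all add: inj_mult_of_nat[OF inj s])
  then have "Q = 0"
    using roots by (rule poly_eq_0_if_cofinite_nat_roots[OF inj])
  then have "coeff Q 1 = 0"
    by simp
  then show ?thesis
    unfolding Q_def A_def E_def
    by (simp add: coeff_sum coeff_mult_1[unfolded One_nat_def] coeff_0_power)
qed


lemma additive_delta_polynomial_linear_operator:
  fixes h \<delta> :: "'a::idom \<Rightarrow> 'a" and cf :: "(avar \<Rightarrow> nat) \<Rightarrow> 'a"
  assumes inj: "inj (of_nat :: nat \<Rightarrow> 'a)" and unit: "\<And>x::'a. x \<noteq> 0 \<Longrightarrow> x dvd 1"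
    and \<delta>: "is_derivation \<delta>" and add: "Modules.additive h" and h1: "h 1 = 0"
    and fin: "finite {e. cf e \<noteq> 0}"
    and ord: "\<forall>e v. cf e \<noteq> 0 \<and> e v \<noteq> 0 \<longrightarrow> avar_ord v \<le> m"
    and rep: "\<And>c. c \<noteq> 0 \<Longrightarrow> h c = c * (\<Sum>e\<in>{e. cf e \<noteq> 0}. cf e * mon_eval e (aassign \<delta> c))"
  obtains b where "\<And>s. h s = (\<Sum>i\<le>m. b i * (\<delta> ^^ i) s)"
proof -
  define E where "E = {e. cf e \<noteq> 0}"
  define N where "N = (\<Sum>e\<in>E. e AInv)"
  define I where "I = {1..m}"
  define k where "k e = N + 1 - e AInv + e (AD 0)" for e
  define c0 where "c0 e = (\<Prod>i\<in>I. (0::'a) ^ e (AD i))" for e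
  define w where "w e i = of_nat (e (AD i)) * (0::'a) ^ (e (AD i) - 1) * (\<Prod>j\<in>I - {i}. 0 ^ e (AD j))"
    for e i
  define b where "b i = (if i = 0 then \<Sum>e\<in>E. cf e * of_nat (k e) * c0 e else \<Sum>e\<in>E. cf e * w e i)"
    for i
  have N: "e AInv \<le> N" if "cf e \<noteq> 0" for e
    unfolding N_def using fin that by (auto intro: member_le_sum simp: E_def)
  have split: "{..m} = insert 0 I"
    by (auto simp: I_def)
  have "h s = (\<Sum>i\<le>m. b i * (\<delta> ^^ i) s)" for s
  proof (cases "s = 0")
    case True
    then show ?thesis
      using additive.zero[OF add] additive.zero[OF additive_funpow[OF is_derivation_additive[OF \<delta>]]]
      by simp
  next
    case False
    have "h s = (\<Sum>e\<in>{e. cf e \<noteq> 0}. cf e * coeff ([:1, s:] ^ (N + 1 - e AInv + e (AD 0))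
        * (\<Prod>i\<in>{1..m}. [:0, (\<delta> ^^ i) s:] ^ e (AD i))) 1)"
      by (rule additive_delta_polynomial_eq_coeff[OF inj unit \<delta> add h1 ord _ rep False]) (assumption | erule N)+
    also have "\<dots> = (\<Sum>e\<in>E. cf e * coeff ([:1, s:] ^ k e * (\<Prod>i\<in>I. [:0, (\<delta> ^^ i) s:] ^ e (AD i))) 1)"
      unfolding E_def I_def k_def ..
    also have "\<dots> = (\<Sum>e\<in>E. cf e * ((\<Sum>i\<in>I. w e i * (\<delta> ^^ i) s) + of_nat (k e) * s * c0 e))"
      unfolding coeff_1_line_product[OF finite_atLeastAtMost[of 1 m, folded I_def]] w_def c0_def
      by (simp add: mult.assoc)
    also have "\<dots> = (\<Sum>e\<in>E. cf e * of_nat (k e) * c0 e) * s + (\<Sum>i\<in>I. (\<Sum>e\<in>E. cf e * w e i) * (\<delta> ^^ i) s)"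
      by (simp add: distrib_left sum.distrib sum_distrib_left sum_distrib_right sum.swap[of _ E I]
          algebra_simps)
    also have "\<dots> = b 0 * s + (\<Sum>i\<in>I. b i * (\<delta> ^^ i) s)"
      by (simp add: b_def I_def)
    also have "\<dots> = (\<Sum>i\<le>m. b i * (\<delta> ^^ i) s)"
      unfolding split by (simp add: I_def)
    finally show ?thesis .
  qed
  then show thesis
    by (rule that)
qed

text \<open>Test \<open>h\<close> on the powers of a unit \<open>y\<close> with \<open>\<delta> y = y\<close>: \<open>h (y ^ k) = S k * y ^ k\<close> with
  \<open>S k = \<Sum>i b i k\<^sup>i\<close>, and the Leibniz rule forces \<open>S (k + 1) = S k + S 1\<close>, so the polynomial \<open>S\<close>
  is linear without constant term.\<close>
lemma linear_operator_eq_const_mult_derivation: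
  fixes h \<delta> :: "'a::idom \<Rightarrow> 'a"
  assumes inj: "inj (of_nat :: nat \<Rightarrow> 'a)" and \<delta>: "is_derivation \<delta>" and h: "unit_derivation h"
    and lin: "\<And>s. h s = (\<Sum>i\<le>m. b i * (\<delta> ^^ i) s)"
    and exp: "\<delta> y = y" and y: "y dvd 1"
  shows "\<exists>\<kappa>. \<forall>x. h x = \<kappa> * \<delta> x"
proof -
  have \<delta>_power: "\<delta> (y ^ k) = of_nat k * y ^ k" for k
    using exp unit_derivation_power[OF is_derivation_unit_derivation[OF \<delta>] y, of "k - 1"]
      is_derivation_1[OF \<delta>] by (cases k) simp_all
  have funpow_power: "(\<delta> ^^ i) (y ^ k) = of_nat k ^ i * y ^ k" for i k
  proof (induction i)
    case (Suc i)
    have "(\<delta> ^^ Suc i) (y ^ k) = \<delta> (of_nat (k ^ i) * y ^ k)"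
      using Suc by simp
    also have "\<dots> = of_nat (k ^ i) * (of_nat k * y ^ k)"
      by (simp only: additive_of_nat_mult[OF is_derivation_additive[OF \<delta>]] \<delta>_power)
    finally show ?case
      by (simp add: algebra_simps)
  qed simp
  define S where "S k = (\<Sum>i\<le>m. b i * of_nat k ^ i)" for k
  have h_power: "h (y ^ k) = S k * y ^ k" for k
    unfolding lin S_def funpow_power sum_distrib_right by (simp add: algebra_simps)
  have y0: "y \<noteq> 0"
    using y by auto
  have S_Suc: "S (Suc k) = S k + S 1" for k
  proof -
    have "S (Suc k) * y ^ Suc k = y * h (y ^ k) + y ^ k * h y"
      using h_power[of "Suc k"] unit_derivation_unit_mult[OF h y, of "y ^ k"] by simp
    also have "\<dots> = (S k + S 1) * y ^ Suc k"
      using h_power[of k] h_power[of 1] by (simp add: algebra_simps)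
    finally show ?thesis
      using y0 by simp
  qed
  have S0: "S 0 = 0"
    using S_Suc[of 0] by simp
  have S_linear: "S k = of_nat k * S 1" for k
  proof (induction k)
    case (Suc k)
    then show ?case
      using S_Suc[of k] by (simp add: algebra_simps)
  qed (simp add: S0)
  define P where "P = (\<Sum>i\<le>m. monom (b i) i) - [:0, S 1:]"
  have "P = 0"
  proof (rule poly_eq_0_if_cofinite_nat_roots[OF inj, of "{}"])
    show "poly P (of_nat k) = 0" for k
      using S_linear[of k] unfolding P_def S_def by (simp add: poly_sum poly_monom algebra_simps)
  qed simp
  have "S 0 = b 0"
    unfolding S_def by (induction m) simp_all
  with S0 have b0: "b 0 = 0"
    by simp
  have b_high: "b i = 0" if "2 \<le> i" "i \<le> m" for i
  proof -
    have "coeff (\<Sum>j\<le>m. monom (b j) j) i = b i"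
      using that by (simp add: coeff_sum)
    moreover have "coeff [:0, S 1:] i = 0"
      using that by (cases i; cases "i - 1") auto
    ultimately show ?thesis
      using \<open>P = 0\<close> unfolding P_def by (metis coeff_diff coeff_0 diff_zero)
  qed
  have "h x = (if 1 \<le> m then b 1 else 0) * \<delta> x" for x
  proof -
    have "b i * (\<delta> ^^ i) x = (if i = 1 then b 1 * \<delta> x else 0)" if "i \<le> m" for i
      using b0 b_high[OF _ that] by (cases "i = 0"; cases "i = 1") auto
    then have "h x = (\<Sum>i\<le>m. if i = 1 then b 1 * \<delta> x else 0)"
      unfolding lin by (intro sum.cong) auto
    then show ?thesis
      by simp
  qed
  then show ?thesis
    by blast
qed

lemma delta_alg_unit_derivation_eq_const_mult:
  fixes \<delta> h g :: "'a::idom \<Rightarrow> 'a"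
  assumes setting: "delta_alg_setting \<delta>" and h: "unit_derivation h"
    and g: "delta_fun1 Alg \<delta> g" and hg: "\<And>c. c dvd 1 \<Longrightarrow> h c = c * g c"
  shows "\<exists>\<kappa>. \<forall>x. h x = \<kappa> * \<delta> x"
proof -
  have inj: "inj (of_nat :: nat \<Rightarrow> 'a)"
    by (rule inj_of_nat_if_of_nat_Suc_neq_0[OF delta_alg_of_nat_Suc[OF setting]])
  have unit: "x \<noteq> 0 \<Longrightarrow> x dvd 1" for x :: 'a
    by (rule delta_alg_unit[OF setting])
  have \<delta>: "is_derivation \<delta>"
    by (rule delta_alg_derivation[OF setting])
  obtain cf :: "(avar \<Rightarrow> nat) \<Rightarrow> 'a" and m where fin: "finite {e. cf e \<noteq> 0}"
      and ord: "\<forall>e v. cf e \<noteq> 0 \<and> e v \<noteq> 0 \<longrightarrow> avar_ord v \<le> m"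
      and g_eq: "\<forall>a. a dvd 1 \<longrightarrow> g a = (\<Sum>e\<in>{e. cf e \<noteq> 0}. cf e * mon_eval e (aassign \<delta> a))"
    using g unfolding delta_fun1_def admissible_def series_eval_def by auto
  have rep: "h c = c * (\<Sum>e\<in>{e. cf e \<noteq> 0}. cf e * mon_eval e (aassign \<delta> c))" if "c \<noteq> 0" for c
    using hg[OF unit[OF that]] g_eq unit[OF that] by simp
  obtain b where "\<And>s. h s = (\<Sum>i\<le>m. b i * (\<delta> ^^ i) s)"
    using additive_delta_polynomial_linear_operator[OF inj unit \<delta> unit_derivation_additive[OF h]
        unit_derivation_1[OF h] fin ord rep] by blast
  moreover obtain y where "\<delta> y = y" and "y \<noteq> 0"
    by (rule delta_alg_exp_exists[OF setting])
  ultimately show ?thesis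
    using linear_operator_eq_const_mult_derivation[OF inj \<delta> h] unit by blast
qed

section \<open>Normal forms\<close>

context beta_cocycle
begin

lemma normal_form_arith:
  fixes \<delta> :: "'a \<Rightarrow> 'a"
  assumes "delta_arith_setting p \<delta>"
  shows "(\<forall>a. a dvd 1 \<longrightarrow> \<psi> a = 0) \<and>
    (\<exists>\<mu> :: 'a ^ 'm. \<exists>\<nu> :: 'a ^ 'm ^ 'm. \<forall>a b. a dvd 1 \<longrightarrow>
       \<beta> a b = (1 - a) *s \<mu> + (uinv a * vdot b lam) *s b + b v* \<nu>)"
  using normal_form_if_defect_zero[OF delta_arith_two_unit[OF assms]
      unit_derivation_eq_0_arith[OF assms unit_derivation_defect]] .

lemma normal_form_alg:
  fixes \<delta> :: "'a \<Rightarrow> 'a"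
  assumes alg: "delta_alg_setting \<delta>" and psi: "\<And>j k. delta_fun1 Alg \<delta> (\<lambda>a. \<psi> a $ j $ k)"
  shows "\<exists>\<mu> :: 'a ^ 'm. \<exists>\<nu> \<eta> :: 'a ^ 'm ^ 'm. \<forall>a b. a dvd 1 \<longrightarrow>
    \<psi> a = (\<chi> i j. - (uinv a * \<delta> a) * \<nu> $ i $ j) \<and>
    \<beta> a b = (1 - a) *s \<mu> + (uinv a * vdot b lam) *s b + b v* \<eta>
      + a *s ((\<chi> j. \<delta> ((uinv a *s b) $ j)) v* \<nu>)"
proof -
  have "\<exists>\<kappa>. \<forall>x. defect j k x = \<kappa> * \<delta> x" for j k
    by (rule delta_alg_unit_derivation_eq_const_mult[OF alg unit_derivation_defect psi defect_unit])
  then obtain K where "\<And>j k x. defect j k x = K j k * \<delta> x"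
    by metis
  moreover have "(2::'a) dvd 1"
    using delta_alg_unit[OF alg] delta_alg_of_nat_Suc[OF alg, of 1] by simp
  ultimately show ?thesis
    using normal_form_if_defect_multiple_of_derivation[OF _ delta_alg_derivation[OF alg]] by blast
qed

end

theorem lemma3p8:
  fixes S :: setting
    and \<delta> :: "'a::idom \<Rightarrow> 'a"
    and \<beta> :: "'a \<Rightarrow> 'a ^ 'm \<Rightarrow> 'a ^ 'm"
    and \<psi> :: "'a \<Rightarrow> 'a ^ 'm ^ 'm"
    and lam :: "'a ^ 'm"
  assumes setting: "in_setting S \<delta>"
    and beta: "delta_map_vec S \<delta> \<beta>"
    and psi: "delta_hom S \<delta> \<psi>"
    and cocycle: "\<And>a1 a2 b1 b2. (a1 dvd 1) \<Longrightarrow> (a2 dvd 1) \<Longrightarrow>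
        \<beta> (a1 * a2) (b1 + a1 *s b2) =
          \<beta> a1 b1 + a1 *s \<beta> a2 b2 + b1 v* \<psi> a2
          + (uinv a2 * vdot b2 lam) *s b1
          + (uinv a2 * vdot b1 lam) *s b2
          + (uinv a1 * (uinv a2 - 1) * vdot b1 lam) *s b1"
  shows "(\<forall>p. S = Arith p \<longrightarrow>
            (\<forall>a. (a dvd 1) \<longrightarrow> \<psi> a = 0) \<and>
            (\<exists>\<mu> :: 'a ^ 'm. \<exists>\<nu> :: 'a ^ 'm ^ 'm. \<forall>a b. (a dvd 1) \<longrightarrow>
               \<beta> a b = (1 - a) *s \<mu> + (uinv a * vdot b lam) *s b + b v* \<nu>))
       \<and> (S = Alg \<longrightarrow>
            (\<exists>\<mu> :: 'a ^ 'm. \<exists>\<nu> \<eta> :: 'a ^ 'm ^ 'm. \<forall>a b. (a dvd 1) \<longrightarrow>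
               \<psi> a = (\<chi> i j. - (uinv a * \<delta> a) * \<nu> $ i $ j) \<and>
               \<beta> a b = (1 - a) *s \<mu> + (uinv a * vdot b lam) *s b + b v* \<eta>
                        + a *s ((\<chi> j. \<delta> ((uinv a *s b) $ j)) v* \<nu>)))"
proof -
  interpret beta_cocycle \<beta> \<psi> lam
    using psi cocycle unfolding delta_hom_def by unfold_locales blast+
  have psi_entries: "delta_fun1 S \<delta> (\<lambda>a. \<psi> a $ j $ k)" for j k
    using psi by (simp add: delta_hom_def delta_map_mat_def)
  show ?thesis
  proof (cases S)
    case (Arith p)
    then show ?thesis
      using setting normal_form_arith[of p] by (simp add: in_setting_def)
  next
    case Alg
    then show ?thesis
      using setting psi_entries normal_form_alg by (simp add: in_setting_def)
  qed
qed

end
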